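(* Let $X_{j,i}\in\Theta$ ($1\le j\le m$, $1\le i\le n_j$) be data, let $k_1,\dots,k_m\ge 1$ and $M\ge1$ be integers, and let $P^j_{n_j}=\frac{1}{n_j}\sum_{i=1}^{n_j}\delta_{X_{j,i}}$. For $\vec G=(G_1,\dots,G_m)$ with $G_j\in\mathcal{O}_{k_j}(\Theta)$ and $\boldsymbol H=(H_1,\dots,H_M)$ with $H_i\in\mathcal{P}_2(\Theta)$, define $$f(\vec G,\boldsymbol H)=\sum_{j=1}^m\Big[W_2^2(G_j,P^j_{n_j})+\tfrac1m d_{W_2}^2(G_j,\boldsymbol H)\Big].$$ Consider one iteration of the Multilevel Wasserstein Means algorithm started from $(\vec G^{(t)},\boldsymbol H^{(t)})$: (1) for each $j$, let $i_j\in\arg\min_{1\le u\le M}W_2^2(G^{(t)}_j,H^{(t)}_u)$ and let $G^{(t+1)}_j$ be a minimizer over $G\in\mathcal{O}_{k_j}(\Theta)$ of $W_2^2(G,P^j_{n_j})+W_2^2(G,H^{(t)}_{i_j})/m$; (2) for each $j$, let $i'_j\in\arg\min_{1\le u\le M}W_2^2(G^{(t+1)}_j,H^{(t)}_u)$, set $C_i=\{l:i'_l=i\}$, and for each $i$ with $C_i\neq\emptyset$ let $H^{(t+1)}_i$ be a minimizer over $H\in\mathcal{P}_2(\Theta)$ of $\sum_{l\in C_i}W_2^2(H,G^{(t+1)}_l)$, while $H^{(t+1)}_i=H^{(t)}_i$ if $C_i=\emptyset$. Assuming all the minimizers above exist, $f(\vec G^{(t+1)},\boldsymbol H^{(t+1)})\le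 f(\vec G^{(t)},\boldsymbol H^{(t)})$. In particular the algorithm monotonically decreases the objective.
   Context: $\Theta\subset\mathbb{R}^d$; $\mathcal{P}_2(\Theta)$ is the set of Borel probability measures $G$ on $\Theta$ with $\int\|x\|^2dG(x)<\infty$. For $G,G'\in\mathcal{P}_2(\Theta)$, $W_2(G,G')=\big(\inf_{\pi\in\Pi(G,G')}\int\|x-y\|^2d\pi(x,y)\big)^{1/2}$, where $\Pi(G,G')$ is the set of couplings of $G$ and $G'$. $\mathcal{O}_k(\Theta)$ denotes the set of probability measures with at most $k$ support points in $\Theta$. For $\boldsymbol H=(H_1,\dots,H_M)$, $d_{W_2}^2(G,\boldsymbol H):=\min_{1\le i\le M}W_2^2(G,H_i)$. *)

theory Defs
  imports "HOL-Probability.Probability"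
begin

definition P2 :: "'a::euclidean_space set \<Rightarrow> 'a measure set" where
  "P2 \<Theta> = {G. prob_space G \<and> sets G = sets borel \<and> (AE x in G. x \<in> \<Theta>)
              \<and> integrable G (\<lambda>x. (norm x)\<^sup>2)}"

definition Ok :: "nat \<Rightarrow> 'a::euclidean_space set \<Rightarrow> 'a measure set" where
  "Ok k \<Theta> = {G. prob_space G \<and> sets G = sets borel \<and>
      (\<exists>S. finite S \<and> card S \<le> k \<and> S \<subseteq> \<Theta> \<and> emeasure G S = 1)}"

definition couplings :: "'a::euclidean_space measure \<Rightarrow> 'a measure \<Rightarrow> ('a \<times> 'a) measure set" where
  "couplings G G' = {\<pi>. sets \<pi> = sets (borel \<Otimes>\<^sub>M borel) \<and>
      distr \<pi> borel fst = G \<and> distr \<pi> borel snd = G'}"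

definition W2sq :: "'a::euclidean_space measure \<Rightarrow> 'a measure \<Rightarrow> ennreal" where
  "W2sq G G' = (INF \<pi>\<in>couplings G G'. \<integral>\<^sup>+ p. ennreal ((dist (fst p) (snd p))\<^sup>2) \<partial>\<pi>)"

definition dW2sq :: "'a::euclidean_space measure \<Rightarrow> (nat \<Rightarrow> 'a measure) \<Rightarrow> nat \<Rightarrow> ennreal" where
  "dW2sq G H M = (MIN i\<in>{1..M}. W2sq G (H i))"

definition empirical :: "nat \<Rightarrow> (nat \<Rightarrow> 'a::euclidean_space) \<Rightarrow> 'a measure" where
  "empirical n x = distr (uniform_count_measure {1..n}) borel x"

definition mwm_obj :: "nat \<Rightarrow> (nat \<Rightarrow> nat) \<Rightarrow> (nat \<Rightarrow> nat \<Rightarrow> 'a::euclidean_space) \<Rightarrow> nat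
    \<Rightarrow> (nat \<Rightarrow> 'a measure) \<Rightarrow> (nat \<Rightarrow> 'a measure) \<Rightarrow> ennreal" where
  "mwm_obj m n X M G H =
     (\<Sum>j=1..m. W2sq (G j) (empirical (n j) (X j)) + dW2sq (G j) H M / of_nat m)"

end

theory Submission
  imports Defs
begin

text \<open>
  For any assignment \<open>a\<close> of the atoms \<open>G\<^sub>j\<close> to centres,
  \<open>f(G, H) \<le> \<Sum>\<^sub>j W\<^sub>2\<^sup>2(G\<^sub>j, P\<^sub>j) + W\<^sub>2\<^sup>2(G\<^sub>j, H\<^bsub>a j\<^esub>) / m\<close>, with equality when \<open>a\<close> is a
  nearest-centre assignment. Step (1) minimises this bound over \<open>G\<close> for \<open>a = idx\<close>;
  reassigning to the nearest centres \<open>idx'\<close> turns it back into \<open>f(G', H)\<close>; and step (2)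
  minimises the bound for \<open>a = idx'\<close> over \<open>H\<close>, cluster by cluster, which by the symmetry
  of \<open>W\<^sub>2\<close> is exactly the barycenter problem the algorithm solves.
\<close>

lemma swap_measurable_coupling:
  assumes "\<pi> \<in> couplings G G'"
  shows "(\<lambda>(x, y). (y, x)) \<in> measurable \<pi> (borel \<Otimes>\<^sub>M borel)"
  using assms measurable_cong_sets[OF _ refl] measurable_pair_swap'[of borel borel]
  by (fastforce simp: couplings_def)

lemma swap_in_couplings:
  assumes "\<pi> \<in> couplings G' G"
  shows "distr \<pi> (borel \<Otimes>\<^sub>M borel) (\<lambda>(x, y). (y, x)) \<in> couplings G G'"
proof -
  have fst_\<pi>: "distr \<pi> borel fst = G'" and snd_\<pi>: "distr \<pi> borel snd = G"
    using assms by (auto simp: couplings_def)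
  note swap = swap_measurable_coupling[OF assms]
  have "distr (distr \<pi> (borel \<Otimes>\<^sub>M borel) (\<lambda>(x, y). (y, x))) borel fst = G"
    using distr_distr[OF measurable_fst swap] snd_\<pi>
    by (simp add: comp_def case_prod_beta)
  moreover have "distr (distr \<pi> (borel \<Otimes>\<^sub>M borel) (\<lambda>(x, y). (y, x))) borel snd = G'"
    using distr_distr[OF measurable_snd swap] fst_\<pi>
    by (simp add: comp_def case_prod_beta)
  ultimately show ?thesis
    by (simp add: couplings_def)
qed

lemma W2sq_le_W2sq_swap: "W2sq G G' \<le> W2sq G' G"
  unfolding W2sq_def
proof (rule INF_greatest)
  let ?cost = "\<lambda>p. ennreal ((dist (fst p) (snd p))\<^sup>2)"
  fix \<pi> assume \<pi>: "\<pi> \<in> couplings G' G"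
  note swap = swap_measurable_coupling[OF \<pi>]
  have cost: "?cost \<in> borel_measurable (borel \<Otimes>\<^sub>M (borel::'a measure))"
    by measurable
  have "(INF \<pi>'\<in>couplings G G'. integral\<^sup>N \<pi>' ?cost)
      \<le> integral\<^sup>N (distr \<pi> (borel \<Otimes>\<^sub>M borel) (\<lambda>(x, y). (y, x))) ?cost"
    by (rule INF_lower[OF swap_in_couplings[OF \<pi>]])
  also have "\<dots> = (\<integral>\<^sup>+ p. ?cost ((\<lambda>(x, y). (y, x)) p) \<partial>\<pi>)"
    by (rule nn_integral_distr[OF swap]) (simp add: cost)
  also have "\<dots> = integral\<^sup>N \<pi> ?cost"
    by (simp add: case_prod_beta dist_commute)
  finally show "(INF \<pi>'\<in>couplings G G'. integral\<^sup>N \<pi>' ?cost) \<le> integral\<^sup>N \<pi> ?cost" .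
qed

lemma W2sq_commute: "W2sq G G' = W2sq G' G"
  by (simp add: W2sq_le_W2sq_swap antisym)

lemma dW2sq_le_W2sq: "i \<in> {1..M} \<Longrightarrow> dW2sq G H M \<le> W2sq G (H i)"
  unfolding dW2sq_def by (simp add: Min_le)

lemma dW2sq_eq_W2sq:
  assumes "i \<in> {1..M}" and "\<forall>u\<in>{1..M}. W2sq G (H i) \<le> W2sq G (H u)"
  shows "dW2sq G H M = W2sq G (H i)"
  unfolding dW2sq_def using assms by (intro antisym Min_le Min.boundedI) auto

lemma sum_clusters_mono:
  fixes f g :: "'i \<Rightarrow> 'j \<Rightarrow> 'b::ordered_comm_monoid_add"
  assumes "finite J" "finite I" "a ` J \<subseteq> I"
    and "\<And>i. i \<in> I \<Longrightarrow> (\<Sum>l\<in>{l\<in>J. a l = i}. f i l) \<le> (\<Sum>l\<in>{l\<in>J. a l = i}. g i l)"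
  shows "(\<Sum>j\<in>J. f (a j) j) \<le> (\<Sum>j\<in>J. g (a j) j)"
proof -
  have regroup: "(\<Sum>j\<in>J. h (a j) j) = (\<Sum>i\<in>I. \<Sum>l\<in>{l\<in>J. a l = i}. h i l)" for h :: "'i \<Rightarrow> 'j \<Rightarrow> 'b"
    using sum.group[OF assms(1-3), of "\<lambda>j. h (a j) j"] by (auto intro!: sum.cong)
  show ?thesis
    unfolding regroup by (intro sum_mono assms(4))
qed

lemma sum_add_divide_ennreal:
  "(\<Sum>j\<in>J. a j + b j / c) = (\<Sum>j\<in>J. a j) + (\<Sum>j\<in>J. b j) / (c::ennreal)"
  by (simp add: sum.distrib divide_ennreal_def sum_distrib_right)

lemma mwm_obj_le_assignment:
  assumes "\<forall>j\<in>{1..m}. a j \<in> {1..M}"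
  shows "mwm_obj m n X M G H
    \<le> (\<Sum>j=1..m. W2sq (G j) (empirical (n j) (X j)) + W2sq (G j) (H (a j)) / of_nat m)"
  unfolding mwm_obj_def using assms
  by (intro sum_mono add_left_mono divide_right_mono_ennreal dW2sq_le_W2sq) auto

lemma mwm_obj_eq_nearest_assignment:
  assumes "\<forall>j\<in>{1..m}. a j \<in> {1..M}"
    and "\<forall>j\<in>{1..m}. \<forall>u\<in>{1..M}. W2sq (G j) (H (a j)) \<le> W2sq (G j) (H u)"
  shows "mwm_obj m n X M G H
    = (\<Sum>j=1..m. W2sq (G j) (empirical (n j) (X j)) + W2sq (G j) (H (a j)) / of_nat m)"
  unfolding mwm_obj_def
proof (intro sum.cong refl)
  fix j assume "j \<in> {1..m}"
  with assms have "dW2sq (G j) H M = W2sq (G j) (H (a j))"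
    by (intro dW2sq_eq_W2sq) auto
  then show "W2sq (G j) (empirical (n j) (X j)) + dW2sq (G j) H M / of_nat m
    = W2sq (G j) (empirical (n j) (X j)) + W2sq (G j) (H (a j)) / of_nat m"
    by simp
qed

theorem theorem3p1:
  fixes \<Theta> :: "'a::euclidean_space set"
    and m M :: nat and n k :: "nat \<Rightarrow> nat"
    and X :: "nat \<Rightarrow> nat \<Rightarrow> 'a"
    and G G' H H' :: "nat \<Rightarrow> 'a measure"
    and idx idx' :: "nat \<Rightarrow> nat"
  assumes m_pos: "m \<ge> 1" and M_pos: "M \<ge> 1"
    and n_pos: "\<forall>j\<in>{1..m}. n j \<ge> 1"
    and k_pos: "\<forall>j\<in>{1..m}. k j \<ge> 1"
    and X_in: "\<forall>j\<in>{1..m}. \<forall>i\<in>{1..n j}. X j i \<in> \<Theta>"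
    and G_in: "\<forall>j\<in>{1..m}. G j \<in> Ok (k j) \<Theta>"
    and H_in: "\<forall>i\<in>{1..M}. H i \<in> P2 \<Theta>"
    and idx_range: "\<forall>j\<in>{1..m}. idx j \<in> {1..M}"
    and idx_min: "\<forall>j\<in>{1..m}. \<forall>u\<in>{1..M}. W2sq (G j) (H (idx j)) \<le> W2sq (G j) (H u)"
    and G'_in: "\<forall>j\<in>{1..m}. G' j \<in> Ok (k j) \<Theta>"
    and G'_min: "\<forall>j\<in>{1..m}. \<forall>F\<in>Ok (k j) \<Theta>.
        W2sq (G' j) (empirical (n j) (X j)) + W2sq (G' j) (H (idx j)) / of_nat m
        \<le> W2sq F (empirical (n j) (X j)) + W2sq F (H (idx j)) / of_nat m"
    and idx'_range: "\<forall>j\<in>{1..m}. idx' j \<in> {1..M}"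
    and idx'_min: "\<forall>j\<in>{1..m}. \<forall>u\<in>{1..M}. W2sq (G' j) (H (idx' j)) \<le> W2sq (G' j) (H u)"
    and H'_nonempty: "\<forall>i\<in>{1..M}. {l\<in>{1..m}. idx' l = i} \<noteq> {} \<longrightarrow>
        H' i \<in> P2 \<Theta> \<and>
        (\<forall>F\<in>P2 \<Theta>. (\<Sum>l\<in>{l\<in>{1..m}. idx' l = i}. W2sq (H' i) (G' l))
                    \<le> (\<Sum>l\<in>{l\<in>{1..m}. idx' l = i}. W2sq F (G' l)))"
    and H'_empty: "\<forall>i\<in>{1..M}. {l\<in>{1..m}. idx' l = i} = {} \<longrightarrow> H' i = H i"
  shows "mwm_obj m n X M G' H' \<le> mwm_obj m n X M G H"
proof -
  let ?P = "\<lambda>j. empirical (n j) (X j)"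
  have cluster_le: "(\<Sum>l\<in>{l\<in>{1..m}. idx' l = i}. W2sq (G' l) (H' i))
      \<le> (\<Sum>l\<in>{l\<in>{1..m}. idx' l = i}. W2sq (G' l) (H i))" if "i \<in> {1..M}" for i
  proof (cases "{l\<in>{1..m}. idx' l = i} = {}")
    case True
    then show ?thesis by (simp only: sum.empty)
  next
    case False
    with that H_in H'_nonempty
    have "(\<Sum>l\<in>{l\<in>{1..m}. idx' l = i}. W2sq (H' i) (G' l))
        \<le> (\<Sum>l\<in>{l\<in>{1..m}. idx' l = i}. W2sq (H i) (G' l))"
      by blast
    then show ?thesis by (simp only: W2sq_commute[of "H' i"] W2sq_commute[of "H i"])
  qed
  have clusters: "(\<Sum>j=1..m. W2sq (G' j) (H' (idx' j))) \<le> (\<Sum>j=1..m. W2sq (G' j) (H (idx' j)))"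
    by (rule sum_clusters_mono[where I = "{1..M}", OF _ _ _ cluster_le]) (use idx'_range in auto)
  have "mwm_obj m n X M G' H'
      \<le> (\<Sum>j=1..m. W2sq (G' j) (?P j) + W2sq (G' j) (H' (idx' j)) / of_nat m)"
    using idx'_range by (rule mwm_obj_le_assignment)
  also have "\<dots> \<le> (\<Sum>j=1..m. W2sq (G' j) (?P j) + W2sq (G' j) (H (idx' j)) / of_nat m)"
    unfolding sum_add_divide_ennreal by (intro add_left_mono divide_right_mono_ennreal clusters)
  also have "\<dots> = mwm_obj m n X M G' H"
    using idx'_range idx'_min by (rule mwm_obj_eq_nearest_assignment[symmetric])
  also have "\<dots> \<le> (\<Sum>j=1..m. W2sq (G' j) (?P j) + W2sq (G' j) (H (idx j)) / of_nat m)"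
    using idx_range by (rule mwm_obj_le_assignment)
  also have "\<dots> \<le> (\<Sum>j=1..m. W2sq (G j) (?P j) + W2sq (G j) (H (idx j)) / of_nat m)"
    using G'_min G_in by (intro sum_mono) auto
  also have "\<dots> = mwm_obj m n X M G H"
    using idx_range idx_min by (rule mwm_obj_eq_nearest_assignment[symmetric])
  finally show ?thesis .
qed

end
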